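(* For every graph $G$ on $[n]$ (with $n\ge3$), the scattering matroid $\mathcal S(G)$ has rank at most $2n-3$. For the complete graph $K_n$ this bound is attained: $\mathrm{rank}\,\mathcal S(K_n)=2n-3$.
   Context: $G\subseteq\binom{[n]}{2}$ is a simple graph. The scattering matrix $S_G$ is the $2n\times|G|$ matrix over the field $\mathbb C(x_1,\dots,x_n)$ whose columns are indexed by the edges $ij\in G$ (with $i<j$). In column $ij$: - the entry in row $k\in[n]$ is $1$ if $k\in\{i,j\}$ and $0$ otherwise; - the entry in row $n+i$ is $1/(x_i-x_j)$; - the entry in row $n+j$ is $1/(x_j-x_i)$; - all other entries are $0$. The scattering matroid $\mathcal S(G)$ is the column matroid of $S_G$ over $\mathbb C(x_1,\dots,x_n)$. Its rank is the rank of $S_G$. *)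

theory Defs
  imports "HOL-Library.Poly_Mapping" "HOL-Library.Product_Lexorder" "HOL-Computational_Algebra.Fraction_Field"
          "Jordan_Normal_Form.DL_Rank"
begin

type_synonym mpoly = "(nat \<Rightarrow>\<^sub>0 nat) \<Rightarrow>\<^sub>0 complex"

type_synonym ratfun = "mpoly fract"

definition var :: "nat \<Rightarrow> ratfun" where
  "var i = Fract (Poly_Mapping.single (Poly_Mapping.single i 1) 1) 1"

definition graph_on :: "nat \<Rightarrow> (nat \<times> nat) set \<Rightarrow> bool" where
  "graph_on n G \<longleftrightarrow> G \<subseteq> {(i,j). 1 \<le> i \<and> i < j \<and> j \<le> n}"

definition complete_graph :: "nat \<Rightarrow> (nat \<times> nat) set" where
  "complete_graph n = {(i,j). 1 \<le> i \<and> i < j \<and> j \<le> n}"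

text \<open>Entry of column ij in row r (rows 1..2n; here 0-based row index r, row r+1).\<close>
definition scat_entry :: "nat \<Rightarrow> nat \<times> nat \<Rightarrow> nat \<Rightarrow> ratfun" where
  "scat_entry n e r = (case e of (i,j) \<Rightarrow>
     if r < n then (if r + 1 = i \<or> r + 1 = j then 1 else 0)
     else if r - n + 1 = i then 1 / (var i - var j)
     else if r - n + 1 = j then 1 / (var j - var i)
     else 0)"

definition scattering_matrix :: "nat \<Rightarrow> (nat \<times> nat) set \<Rightarrow> ratfun mat" where
  "scattering_matrix n G =
     mat (2 * n) (card G) (\<lambda>(r, c). scat_entry n (sorted_list_of_set G ! c) r)"

definition scattering_rank :: "nat \<Rightarrow> (nat \<times> nat) set \<Rightarrow> nat" where
  "scattering_rank n G = vec_space.rank (2 * n) (scattering_matrix n G)"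

end

(*
  Write v_ij for the column of edge ij. The 2n - 3 columns of the edges through vertex 1 or 2
  form a basis of the column space of S(K_n), and every S(G) has its columns among those of
  S(K_n). They span: for 3 <= i < j, v_ij is a combination of v_1i, v_2i, v_1j, v_2j and v_12 with
  coefficients that are rational functions of x_1, x_2, x_i, x_j, checked row by row
  (four_point_relation). They are independent: for k >= 3 only v_1k and v_2k meet the two rows
  of vertex k, where they form the invertible block [1, 1; 1/(x_k - x_1), 1/(x_k - x_2)]; once
  their coefficients vanish, v_12 is the only remaining column meeting the first row.
*)
theory Submission
  imports Defs
begin

lemma four_point_relation:
  fixes a b p q :: "'a::field"
  assumes "distinct [a, b, p, q]"
  obtains \<alpha> \<gamma> where "\<alpha> + \<gamma> = 1"
    and "\<alpha> / (p - a) + (1 - \<alpha>) / (p - b) = 1 / (p - q)"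
    and "\<gamma> / (q - a) + (1 - \<gamma>) / (q - b) = 1 / (q - p)"
    and "\<alpha> / (a - p) + \<gamma> / (a - q) = 1 / (a - b)"
    and "(1 - \<alpha>) / (b - p) + (1 - \<gamma>) / (b - q) = 1 / (b - a)"
proof
  have nz: "a - b \<noteq> 0" "b - a \<noteq> 0" "p - q \<noteq> 0" "q - p \<noteq> 0" "p - a \<noteq> 0" "a - p \<noteq> 0"
    "p - b \<noteq> 0" "b - p \<noteq> 0" "q - a \<noteq> 0" "a - q \<noteq> 0" "q - b \<noteq> 0" "b - q \<noteq> 0"
    using assms by auto
  define \<alpha> where "\<alpha> = (q - b) * (p - a) / ((a - b) * (p - q))"
  show "\<alpha> + (1 - \<alpha>) = 1" by simp
  show "\<alpha> / (p - a) + (1 - \<alpha>) / (p - b) = 1 / (p - q)"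
    "(1 - \<alpha>) / (q - a) + (1 - (1 - \<alpha>)) / (q - b) = 1 / (q - p)"
    "\<alpha> / (a - p) + (1 - \<alpha>) / (a - q) = 1 / (a - b)"
    "(1 - \<alpha>) / (b - p) + (1 - (1 - \<alpha>)) / (b - q) = 1 / (b - a)"
    using nz unfolding \<alpha>_def by (simp_all add: divide_simps) (simp_all add: algebra_simps)
qed

lemma two_pole_coeffs_eq_zero:
  fixes a b x c d :: "'a::field"
  assumes "a \<noteq> b" "x \<noteq> a" "x \<noteq> b"
    and "c + d = 0" "c / (x - a) + d / (x - b) = 0"
  shows "c = 0 \<and> d = 0"
proof -
  have d: "d = - c"
    using assms(4) by (simp add: add_eq_0_iff)
  have "x - a \<noteq> 0" "x - b \<noteq> 0"
    using assms(2,3) by auto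
  with assms(5) d have "c * (a - b) = 0"
    by (auto simp: divide_simps)
  then show ?thesis
    using assms(1) d by simp
qed

lemma (in vec_space) rank_le_card_spanning:
  assumes A: "A \<in> carrier_mat n nc"
    and B: "finite B" "B \<subseteq> carrier_vec n"
    and span: "set (cols A) \<subseteq> span B"
  shows "rank A \<le> card B"
proof -
  let ?P = "\<lambda>T. T \<subseteq> set (cols A) \<and> lin_indpt T"
  obtain S where S: "finite S" "maximal S ?P"
    using maximal_exists_superset[of "set (cols A)" ?P "{}"] finite_lin_indpt2[of "{}"] by auto
  then have "S \<subseteq> span B" "lin_indpt S"
    using span by (auto simp: maximal_def)
  then have "card S \<le> card B"
    using replacement[OF S(1) B] by fastforce
  then show ?thesis
    using rank_card_indpt[OF A S(2)] by simp
qed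

lemma single_eq_single_iff_key:
  "v \<noteq> 0 \<Longrightarrow> Poly_Mapping.single a v = Poly_Mapping.single b v \<longleftrightarrow> a = b"
  by (metis lookup_single_eq lookup_single_not_eq)

lemma var_eq_iff [simp]: "var i = var j \<longleftrightarrow> i = j"
  by (simp add: var_def eq_fract single_eq_single_iff_key)

lemma finite_complete_graph: "finite (complete_graph n)"
proof (rule finite_subset)
  show "complete_graph n \<subseteq> {1..n} \<times> {1..n}"
    by (auto simp: complete_graph_def)
qed simp

definition scat_col :: "nat \<Rightarrow> nat \<times> nat \<Rightarrow> ratfun vec" where
  "scat_col n e = vec (2 * n) (scat_entry n e)"

lemma scat_col_carrier [simp]: "scat_col n e \<in> carrier_vec (2 * n)"
  by (simp add: scat_col_def)

lemma dim_vec_scat_col [simp]: "dim_vec (scat_col n e) = 2 * n"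
  by (simp add: scat_col_def)

lemma index_scat_col [simp]: "r < 2 * n \<Longrightarrow> scat_col n e $ r = scat_entry n e r"
  by (simp add: scat_col_def)

lemma scat_entry_upper_row [simp]:
  "r < n \<Longrightarrow> scat_entry n (i, j) r = (if r + 1 = i \<or> r + 1 = j then 1 else 0)"
  by (simp add: scat_entry_def)

lemma scat_entry_lower_row [simp]:
  "scat_entry n (i, j) (n + r) =
    (if r + 1 = i then 1 / (var i - var j) else if r + 1 = j then 1 / (var j - var i) else 0)"
  by (simp add: scat_entry_def)

lemma inj_on_scat_col: "inj_on (scat_col n) (complete_graph n)"
proof
  fix e f assume e: "e \<in> complete_graph n" and f: "f \<in> complete_graph n"
    and eq: "scat_col n e = scat_col n f"
  obtain i j where ij: "e = (i, j)" "1 \<le> i" "i < j" "j \<le> n"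
    using e by (auto simp: complete_graph_def)
  obtain i' j' where ij': "f = (i', j')" "1 \<le> i'" "i' < j'" "j' \<le> n"
    using f by (auto simp: complete_graph_def)
  have same_ends: "k = i \<or> k = j \<longleftrightarrow> k = i' \<or> k = j'" if "1 \<le> k" "k \<le> n" for k
  proof -
    have "scat_col n e $ (k - 1) = scat_col n f $ (k - 1)"
      using eq by simp
    then show ?thesis
      using that ij ij' by (auto simp: scat_entry_def split: if_splits)
  qed
  have "i \<in> {i', j'}" "j \<in> {i', j'}"
    using same_ends[of i] same_ends[of j] ij by auto
  then show "e = f"
    using ij ij' by auto
qed

lemma graph_on_iff_subset_complete_graph: "graph_on n G \<longleftrightarrow> G \<subseteq> complete_graph n"
  by (simp add: graph_on_def complete_graph_def)

definition book_graph :: "nat \<Rightarrow> (nat \<times> nat) set" where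
  "book_graph n = {e \<in> complete_graph n. fst e \<le> 2}"

lemma book_graph_eq: "book_graph n = Pair 1 ` {2..n} \<union> Pair 2 ` {3..n}"
  by (auto simp: book_graph_def complete_graph_def image_iff)

lemma card_book_graph: "card (book_graph n) = 2 * n - 3"
proof -
  have "card (book_graph n) = card (Pair (1::nat) ` {2..n}) + card (Pair (2::nat) ` {3..n})"
    unfolding book_graph_eq by (rule card_Un_disjoint) auto
  also have "\<dots> = card {2..n} + card {3..n}"
    by (simp add: card_image inj_on_def)
  finally show ?thesis
    by simp
qed

lemma book_graph_subset: "book_graph n \<subseteq> complete_graph n"
  by (simp add: book_graph_def)

lemma finite_book_graph: "finite (book_graph n)"
  using finite_subset[OF book_graph_subset finite_complete_graph] .

lemma scattering_matrix_carrier: "scattering_matrix n G \<in> carrier_mat (2 * n) (card G)"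
  by (simp add: scattering_matrix_def)

lemma set_cols_scattering_matrix:
  assumes "finite G"
  shows "set (cols (scattering_matrix n G)) = scat_col n ` G"
proof -
  let ?es = "sorted_list_of_set G"
  have "set (cols (scattering_matrix n G)) = col (scattering_matrix n G) ` {..<length ?es}"
    by (auto simp: cols_def scattering_matrix_def)
  also have "\<dots> = scat_col n ` (!) ?es ` {..<length ?es}"
    unfolding image_image
    by (rule image_cong) (auto simp: scattering_matrix_def scat_col_def col_def)
  also have "(!) ?es ` {..<length ?es} = G"
    using assms by (metis image_set list.set_map map_nth set_sorted_list_of_set atLeast_upt set_upt)
  finally show ?thesis .
qed

lemma card_scat_col_book_graph: "card (scat_col n ` book_graph n) = 2 * n - 3"
  using card_image[OF inj_on_subset[OF inj_on_scat_col book_graph_subset]] card_book_graph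
  by simp

lemma book_graph_coeffs_eq_zero:
  fixes c :: "nat \<times> nat \<Rightarrow> ratfun"
  assumes row: "\<And>r. r < 2 * n \<Longrightarrow> (\<Sum>e\<in>book_graph n. c e * scat_entry n e r) = 0"
    and e: "e \<in> book_graph n"
  shows "c e = 0"
proof -
  have outer: "c (1, m + 1) = 0 \<and> c (2, m + 1) = 0" if m: "2 \<le> m" "m < n" for m
  proof -
    have in_book: "(1, m + 1) \<in> book_graph n" "(2, m + 1) \<in> book_graph n"
      using m by (auto simp: book_graph_def complete_graph_def)
    have "(\<Sum>e\<in>book_graph n. c e * scat_entry n e r)
        = (\<Sum>e\<in>{(1, m + 1), (2, m + 1)}. c e * scat_entry n e r)"
      if "r = m \<or> r = n + m" for r
      by (rule sum.mono_neutral_right[OF finite_book_graph])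
        (use in_book m that in \<open>auto simp: book_graph_def complete_graph_def split: if_splits\<close>)
    then have "c (1, m + 1) + c (2, m + 1) = 0"
        "c (1, m + 1) / (var (m + 1) - var 1) + c (2, m + 1) / (var (m + 1) - var 2) = 0"
      using row[of m] row[of "n + m"] m by auto
    then show ?thesis
      using m by (intro two_pole_coeffs_eq_zero) auto
  qed
  have c12: "c (1, 2) = 0" if "(1, 2) \<in> book_graph n"
  proof -
    have "(\<Sum>e\<in>book_graph n. c e * scat_entry n e 0) = (\<Sum>e\<in>{(1, 2)}. c e * scat_entry n e 0)"
    proof (rule sum.mono_neutral_right[OF finite_book_graph])
      show "\<forall>e\<in>book_graph n - {(1, 2)}. c e * scat_entry n e 0 = 0"
      proof
        fix e assume e: "e \<in> book_graph n - {(1, 2)}"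
        obtain i j where ij: "e = (i, j)"
          by (cases e)
        with e have "i = 1 \<and> 3 \<le> j \<or> i = 2" "i < j" "j \<le> n"
          by (auto simp: book_graph_def complete_graph_def)
        with ij show "c e * scat_entry n e 0 = 0"
          using outer[of "j - 1"] by auto
      qed
    qed (use that in simp)
    moreover have "n \<ge> 2"
      using that by (simp add: book_graph_def complete_graph_def)
    ultimately show ?thesis
      using row[of 0] by simp
  qed
  obtain i j where ij: "e = (i, j)"
    by (cases e)
  with e have "i = 1 \<and> j = 2 \<or> (i = 1 \<or> i = 2) \<and> 3 \<le> j \<and> j \<le> n"
    by (auto simp: book_graph_def complete_graph_def)
  then show ?thesis
    using c12 outer[of "j - 1"] e ij by auto
qed

context
  fixes n :: nat
begin

interpretation vs: vec_space "TYPE(ratfun)" "2 * n" .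

lemma scat_col_five_term_relation:
  assumes ij: "3 \<le> i" "i < j" "j \<le> n"
  obtains \<alpha> \<gamma> :: ratfun where
    "scat_col n (i, j) = \<alpha> \<cdot>\<^sub>v scat_col n (1, i) + (1 - \<alpha>) \<cdot>\<^sub>v scat_col n (2, i)
       + \<gamma> \<cdot>\<^sub>v scat_col n (1, j) + (1 - \<gamma>) \<cdot>\<^sub>v scat_col n (2, j) + (- 1) \<cdot>\<^sub>v scat_col n (1, 2)"
proof -
  have "distinct [var 1, var 2, var i, var j]"
    using ij by auto
  then obtain \<alpha> \<gamma> where rel: "\<alpha> + \<gamma> = 1"
    "\<alpha> / (var i - var 1) + (1 - \<alpha>) / (var i - var 2) = 1 / (var i - var j)"
    "\<gamma> / (var j - var 1) + (1 - \<gamma>) / (var j - var 2) = 1 / (var j - var i)"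
    "\<alpha> / (var 1 - var i) + \<gamma> / (var 1 - var j) = 1 / (var 1 - var 2)"
    "(1 - \<alpha>) / (var 2 - var i) + (1 - \<gamma>) / (var 2 - var j) = 1 / (var 2 - var 1)"
    by (rule four_point_relation)
  let ?R = "\<alpha> \<cdot>\<^sub>v scat_col n (1, i) + (1 - \<alpha>) \<cdot>\<^sub>v scat_col n (2, i)
       + \<gamma> \<cdot>\<^sub>v scat_col n (1, j) + (1 - \<gamma>) \<cdot>\<^sub>v scat_col n (2, j) + (- 1) \<cdot>\<^sub>v scat_col n (1, 2)"
  have "scat_col n (i, j) $ r = ?R $ r" if r: "r < 2 * n" for r
  proof (cases "r < n")
    case True
    consider "r + 1 = 1" | "r + 1 = 2" | "r + 1 = i" | "r + 1 = j" | "r + 1 \<notin> {1, 2, i, j}"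
      by blast
    then show ?thesis
      using True r ij rel(1) by cases (auto simp: scat_entry_def algebra_simps)
  next
    case False
    consider "r - n + 1 = 1" | "r - n + 1 = 2" | "r - n + 1 = i" | "r - n + 1 = j"
      | "r - n + 1 \<notin> {1, 2, i, j}"
      by blast
    then show ?thesis
      using False r ij rel by cases (auto simp: scat_entry_def algebra_simps)
  qed
  then show thesis
    by (intro that eq_vecI) auto
qed

lemma scat_col_in_span_book_graph:
  assumes "e \<in> complete_graph n"
  shows "scat_col n e \<in> vs.span (scat_col n ` book_graph n)"
proof -
  let ?B = "scat_col n ` book_graph n"
  have B: "?B \<subseteq> carrier_vec (2 * n)"
    by auto
  have book: "scat_col n f \<in> vs.span ?B" if "f \<in> book_graph n" for f
    using vs.in_own_span[OF B] that by blast
  obtain i j where ij: "e = (i, j)" "1 \<le> i" "i < j" "j \<le> n"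
    using assms by (auto simp: complete_graph_def)
  show ?thesis
  proof (cases "i \<le> 2")
    case True
    then show ?thesis
      using book assms ij(1) by (simp add: book_graph_def)
  next
    case False
    then obtain \<alpha> \<gamma> where rel: "scat_col n (i, j) = \<alpha> \<cdot>\<^sub>v scat_col n (1, i) + (1 - \<alpha>) \<cdot>\<^sub>v scat_col n (2, i)
       + \<gamma> \<cdot>\<^sub>v scat_col n (1, j) + (1 - \<gamma>) \<cdot>\<^sub>v scat_col n (2, j) + (- 1) \<cdot>\<^sub>v scat_col n (1, 2)"
      using scat_col_five_term_relation[of i j] False ij by auto
    have "(1, i) \<in> book_graph n" "(2, i) \<in> book_graph n" "(1, j) \<in> book_graph n"
      "(2, j) \<in> book_graph n" "(1, 2) \<in> book_graph n"
      using False ij by (auto simp: book_graph_def complete_graph_def)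
    then show ?thesis
      unfolding ij(1) rel
      by (intro vs.span_add1[OF B] vs.prod_in_span[OF _ B] book disjI2 scat_col_carrier)
  qed
qed

lemma lin_indpt_book_graph: "vs.lin_indpt (scat_col n ` book_graph n)"
proof (rule vs.finite_lin_indpt2)
  let ?B = "scat_col n ` book_graph n"
  show "finite ?B"
    using finite_book_graph by simp
  show B: "?B \<subseteq> carrier_vec (2 * n)"
    by auto
  fix a assume lc: "vs.lincomb a ?B = 0\<^sub>v (2 * n)"
  have "(\<Sum>e\<in>book_graph n. a (scat_col n e) * scat_entry n e r) = 0" if r: "r < 2 * n" for r
  proof -
    have "(\<Sum>e\<in>book_graph n. a (scat_col n e) * scat_entry n e r) = (\<Sum>v\<in>?B. a v * v $ r)"
      using sum.reindex[OF inj_on_subset[OF inj_on_scat_col book_graph_subset], of "\<lambda>v. a v * v $ r"] r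
      by simp
    also have "\<dots> = vs.lincomb a ?B $ r"
      using vs.lincomb_index[OF r B] by simp
    finally show ?thesis
      using lc r by simp
  qed
  then show "\<forall>v\<in>?B. a v = 0"
    using book_graph_coeffs_eq_zero[of n "\<lambda>e. a (scat_col n e)"] by blast
qed

lemma scattering_rank_le:
  assumes "graph_on n G"
  shows "scattering_rank n G \<le> 2 * n - 3"
proof -
  have G: "G \<subseteq> complete_graph n"
    using assms by (simp add: graph_on_iff_subset_complete_graph)
  have "vs.rank (scattering_matrix n G) \<le> card (scat_col n ` book_graph n)"
  proof (rule vs.rank_le_card_spanning[OF scattering_matrix_carrier])
    show "finite (scat_col n ` book_graph n)"
      using finite_book_graph by simp
    show "set (cols (scattering_matrix n G)) \<subseteq> vs.span (scat_col n ` book_graph n)"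
      using set_cols_scattering_matrix[OF finite_subset[OF G finite_complete_graph]]
        scat_col_in_span_book_graph G by auto
  qed auto
  then show ?thesis
    by (simp add: scattering_rank_def card_scat_col_book_graph)
qed

lemma scattering_rank_complete_graph: "scattering_rank n (complete_graph n) = 2 * n - 3"
proof (rule antisym)
  show "scattering_rank n (complete_graph n) \<le> 2 * n - 3"
    by (simp add: scattering_rank_le graph_on_iff_subset_complete_graph)
  have "scat_col n ` book_graph n \<subseteq> set (cols (scattering_matrix n (complete_graph n)))"
    using book_graph_subset by (auto simp: set_cols_scattering_matrix finite_complete_graph)
  from vs.rank_ge_card_indpt[OF scattering_matrix_carrier this lin_indpt_book_graph]
  show "2 * n - 3 \<le> scattering_rank n (complete_graph n)"
    by (simp add: scattering_rank_def card_scat_col_book_graph)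
qed

end

theorem mainTheorem7:
  fixes n :: nat
  assumes "n \<ge> 3"
  shows "(\<forall>G. graph_on n G \<longrightarrow> scattering_rank n G \<le> 2 * n - 3)
         \<and> scattering_rank n (complete_graph n) = 2 * n - 3"
  using scattering_rank_le scattering_rank_complete_graph by blast

end
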